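(* Consider the exponential case $\ell(y)=y$, with $0<c<p$, horizon $T\ge1$, $b_1>0$, $a_1>1$, $W=(0,\infty)$ and $\tilde Q=[0,\infty)$. Then there exist a unique SMPS $(w^*_t(a),\tilde z^*_t(a,w))_{t\in\{1,\dots,T\}}$ and standardized value functions $f^R_t(a),\hat f^R_t(a,w),f^M_t(a)$ such that, for all $t\in\{1,\dots,T\}$ and $a\in A$, writing $\tilde z^*_t(a):=\tilde z^*_t(a,w^*_t(a))$: (i) $w^*_t(a)\in\big(0,\ p+f^R_{t+1}(a+1)-f^R_{t+1}(a)\big)$; (ii) $0<\tilde z^*_t(a)<\infty$; (iii) $p+f^R_t(a+1)-f^R_t(a)>0$; (iv) $p-c+f^R_t(a+1)+f^M_t(a+1)>f^R_t(a)+f^M_t(a)$.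
   Context: Let $A=\{a_1+n:n=0,1,2,\dots\}$. The predictive distribution function with hyperparameters $(a,b)$ is $G(y\mid a,b)=1-\big(b/(b+y)\big)^{a}$ for $y\ge0$, $\bar G=1-G$, and $E[\,\cdot\mid a,1]$ denotes expectation under $D\sim G(\cdot\mid a,1)$. Standardized per-period payoffs: retailer $\tilde\Pi^R(w,\tilde z\mid a)=(a-1)\big(p\,E[\min(D,\tilde z)\mid a,1]-w\tilde z\big)$, manufacturer $\tilde\Pi^M(w,\tilde z\mid a)=(a-1)(w-c)\tilde z$. For $f:A\to\mathbb R$ define $\mathcal E[f,\tilde z\mid a]=G(\tilde z\mid a-1,1)f(a+1)+\bar G(\tilde z\mid a-1,1)f(a)$. Standardized Markov strategies are maps $w_t:A\to W$ (manufacturer) and $\tilde z_t:A\times W\to\tilde Q$ (retailer), $t=1,\dots,T$. A pair $(w^*_t,\tilde z^*_t)_{t\le T}$ is a standardized Markov perfect solution (SMPS), with standardized value functions $f^R_t,f^M_t:A\to\mathbb R$ and $\hat f^R_t:A\times W\to\mathbb R$ ($t=1,\dots,T+1$), if for all $a\in A$, $w\in W$: (i) $f^R_{T+1}=\hat f^R_{T+1}=f^M_{T+1}=0$; (ii) for $t\le T$, $\hat f^R_t(a,w)=\max_{\tilde z\in\tilde Q}\{\tilde\Pi^R(w,\tilde z\mid a)+\mathcal E[f^R_{t+1},\tilde z\mid a]\}$ and $\tilde z^*_t(a,w)$ attains it; (iii) for $t\le T$, $f^M_t(a)=\max_{w\in W}\{\tilde\Pi^M(w,\tilde z^*_t(a,w)\mid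 a)+\mathcal E[f^M_{t+1},\tilde z^*_t(a,w)\mid a]\}$ and $w^*_t(a)$ attains it; (iv) $f^R_t(a)=\hat f^R_t(a,w^*_t(a))$. Conditions (iii)–(iv) of the claim for $t$ refer to the functions $f^R_t,f^M_t$ for $t\le T$ (and hold trivially-by-convention also at $t=T+1$ where they are $0$). *)

theory Defs
  imports "HOL-Analysis.Analysis"
begin

definition Aset :: "real \<Rightarrow> real set" where
  "Aset a1 = {a1 + real n | n. True}"

definition Wset :: "real set" where "Wset = {0<..}"
definition Qset :: "real set" where "Qset = {0..}"

definition Gdist :: "real \<Rightarrow> real \<Rightarrow> real \<Rightarrow> real" where
  "Gdist y a b = 1 - (b / (b + y)) powr a"

definition Gbar :: "real \<Rightarrow> real \<Rightarrow> real \<Rightarrow> real" where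
  "Gbar y a b = 1 - Gdist y a b"

definition Gdens :: "real \<Rightarrow> real \<Rightarrow> real" where
  "Gdens a y = (if 0 \<le> y then a * (1 + y) powr (-(a + 1)) else 0)"

definition expect_min :: "real \<Rightarrow> real \<Rightarrow> real" where
  "expect_min a z = (LINT y|lborel. Gdens a y * min y z)"

definition PiR :: "real \<Rightarrow> real \<Rightarrow> real \<Rightarrow> real \<Rightarrow> real" where
  "PiR p w z a = (a - 1) * (p * expect_min a z - w * z)"

definition PiM :: "real \<Rightarrow> real \<Rightarrow> real \<Rightarrow> real \<Rightarrow> real" where
  "PiM c w z a = (a - 1) * (w - c) * z"

definition condE :: "(real \<Rightarrow> real) \<Rightarrow> real \<Rightarrow> real \<Rightarrow> real" where
  "condE f z a = Gdist z (a - 1) 1 * f (a + 1) + Gbar z (a - 1) 1 * f a"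

text \<open>Standardized Markov perfect solution with value functions (periods 1..T, value
  functions indexed 1..T+1; functions are only constrained on their domains).\<close>
definition is_SMPS ::
  "real \<Rightarrow> real \<Rightarrow> real \<Rightarrow> nat \<Rightarrow> (nat \<Rightarrow> real \<Rightarrow> real) \<Rightarrow> (nat \<Rightarrow> real \<Rightarrow> real \<Rightarrow> real)
   \<Rightarrow> (nat \<Rightarrow> real \<Rightarrow> real) \<Rightarrow> (nat \<Rightarrow> real \<Rightarrow> real \<Rightarrow> real) \<Rightarrow> (nat \<Rightarrow> real \<Rightarrow> real) \<Rightarrow> bool" where
  "is_SMPS p c a1 T ws zs fR fhR fM \<longleftrightarrow>
     \<comment> \<open>strategies are standardized Markov strategies\<close>
     (\<forall>t\<in>{1..T}. \<forall>a\<in>Aset a1. ws t a \<in> Wset \<and> (\<forall>w\<in>Wset. zs t a w \<in> Qset)) \<and>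
     \<comment> \<open>(i) terminal conditions\<close>
     (\<forall>a\<in>Aset a1. fR (T + 1) a = 0 \<and> fM (T + 1) a = 0 \<and> (\<forall>w\<in>Wset. fhR (T + 1) a w = 0)) \<and>
     \<comment> \<open>(ii) retailer optimality\<close>
     (\<forall>t\<in>{1..T}. \<forall>a\<in>Aset a1. \<forall>w\<in>Wset.
        fhR t a w = PiR p w (zs t a w) a + condE (fR (t + 1)) (zs t a w) a \<and>
        (\<forall>z\<in>Qset. PiR p w z a + condE (fR (t + 1)) z a \<le> fhR t a w)) \<and>
     \<comment> \<open>(iii) manufacturer optimality\<close>
     (\<forall>t\<in>{1..T}. \<forall>a\<in>Aset a1.
        fM t a = PiM c (ws t a) (zs t a (ws t a)) a + condE (fM (t + 1)) (zs t a (ws t a)) a \<and>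
        (\<forall>w\<in>Wset. PiM c w (zs t a w) a + condE (fM (t + 1)) (zs t a w) a \<le> fM t a)) \<and>
     \<comment> \<open>(iv) retailer value along the equilibrium wholesale price\<close>
     (\<forall>t\<in>{1..T}. \<forall>a\<in>Aset a1. fR t a = fhR t a (ws t a))"

end

theory Submission
  imports Defs
begin

text \<open>For \<open>a > 1\<close> the expected sales have the closed form
  \<open>E[min(D, z)] = (1 - (1 + z)^(1 - a)) / (a - 1)\<close>, so with continuation values \<open>R\<close> the retailer
  maximizes \<open>R a + K (1 - (1 + z)^(1 - a)) - (a - 1) w z\<close> with the effective price
  \<open>K = p + R (a + 1) - R a\<close>. This is strictly concave in \<open>z\<close>, with unique maximizer
  \<open>z = (K / w)^(1 / a) - 1\<close> for \<open>w < K\<close> and \<open>z = 0\<close> otherwise. Substituting it, the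
  manufacturer's gain as a function of \<open>s = (w / K)^(1 / a)\<close> has derivative
  \<open>(a - 1) s^(a - 2) \<rho>(s)\<close>, where \<open>\<rho>\<close> decreases strictly from \<open>+\<infinity>\<close> at \<open>0\<close> to
  \<open>c - K - D\<close> at \<open>1\<close> (\<open>D\<close> the increment of the manufacturer's continuation value), so the
  wholesale price is unique and interior as soon as \<open>K > 0\<close> and \<open>K + D > c\<close>. By Bernoulli's
  inequality the two stage gains stay below \<open>K\<close> and \<open>K + D - c\<close>, which makes these conditions
  invariant under backward induction from the zero terminal values; existence, uniqueness and the
  bounds then follow stage by stage.\<close>

lemma powr_gt_bernoulli:
  fixes x r :: real
  assumes "0 < x" "x \<noteq> 1" "r < 0"
  shows "1 + r * (x - 1) < x powr r"
proof -
  have "ln x < x - 1"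
    using ln_le_minus_one[OF assms(1)] ln_eq_minus_one[OF assms(1)] assms(2) by fastforce
  then have "1 + r * (x - 1) < 1 + r * ln x"
    using assms(3) by (simp add: mult_less_cancel_left_neg)
  also have "\<dots> \<le> exp (r * ln x)"
    by (rule exp_ge_add_one_self)
  also have "\<dots> = x powr r"
    using assms(1) by (simp add: powr_def)
  finally show ?thesis .
qed

text \<open>A primitive of \<open>\<lambda>y. a * (1 + y) powr (-(a + 1)) * min y z\<close>, found by integration by parts:
  \<open>(1 - (1 + min y z) powr (1 - a)) / (a - 1) - min y z * (1 + y) powr (-a)\<close>.\<close>
definition expect_min_primitive :: "real \<Rightarrow> real \<Rightarrow> real \<Rightarrow> real" where
  "expect_min_primitive a z y =
     (if y \<le> z then (1 - (1 + y) powr (1 - a)) / (a - 1) - y * (1 + y) powr (-a)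
      else (1 - (1 + z) powr (1 - a)) / (a - 1) - z * (1 + y) powr (-a))"

lemma expect_min_primitive_deriv:
  fixes a y z :: real
  assumes a: "1 < a" and y: "-1 < y"
  shows "(expect_min_primitive a z has_real_derivative a * (1 + y) powr (-(a + 1)) * min y z) (at y)"
proof -
  define g where "g y = a * (1 + y) powr (-(a + 1))" for y :: real
  define F1 where "F1 y = (1 - (1 + y) powr (1 - a)) / (a - 1) - y * (1 + y) powr (-a)" for y :: real
  define F2 where "F2 y = (1 - (1 + z) powr (1 - a)) / (a - 1) - z * (1 + y) powr (-a)" for y :: real
  have dF1: "(F1 has_real_derivative g y * y) (at y)"
    unfolding F1_def g_def
    by (insert a y, (rule derivative_eq_intros refl | simp)+, simp add: powr_diff powr_minus field_simps)
  have dF2: "(F2 has_real_derivative g y * z) (at y)"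
    unfolding F2_def g_def by (insert a y, (rule derivative_eq_intros refl | simp)+)
  have "((\<lambda>y. if y \<in> {..z} then F1 y else F2 y) has_derivative
      (if y \<in> {..z} then (*) (g y * y) else (*) (g y * z))) (at y within {..z} \<union> {z<..})"
  proof (rule has_derivative_If_within_closures)
    show "F1 x = F2 x" if "x \<in> closure {..z}" "x \<in> closure {z<..}" for x
      using that by (simp add: F1_def F2_def)
  qed (use dF1 dF2 in \<open>auto simp: has_field_derivative_def intro: has_derivative_at_withinI\<close>)
  moreover have "{..z} \<union> {z<..} = (UNIV :: real set)"
    by auto
  moreover have "expect_min_primitive a z = (\<lambda>y. if y \<in> {..z} then F1 y else F2 y)"
    by (auto simp: fun_eq_iff expect_min_primitive_def F1_def F2_def)
  ultimately show ?thesis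
    by (auto simp: has_field_derivative_def g_def min_def split: if_splits)
qed

lemma expect_min_primitive_at_top:
  assumes "1 < a"
  shows "(expect_min_primitive a z \<longlongrightarrow> (1 - (1 + z) powr (1 - a)) / (a - 1)) at_top"
proof -
  have "((\<lambda>y. (1 + y) powr (-a)) \<longlongrightarrow> 0) at_top"
    using assms by (intro tendsto_neg_powr) (auto intro!: filterlim_tendsto_add_at_top filterlim_ident)
  then have "((\<lambda>y. (1 - (1 + z) powr (1 - a)) / (a - 1) - z * (1 + y) powr (-a))
      \<longlongrightarrow> (1 - (1 + z) powr (1 - a)) / (a - 1) - z * 0) at_top"
    by (intro tendsto_intros)
  moreover have "eventually (\<lambda>y. (1 - (1 + z) powr (1 - a)) / (a - 1) - z * (1 + y) powr (-a)
      = expect_min_primitive a z y) at_top"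
    using eventually_gt_at_top[of z] by eventually_elim (simp add: expect_min_primitive_def)
  ultimately show ?thesis
    using tendsto_cong by force
qed

lemma expect_min_closed_form:
  fixes a z :: real
  assumes a: "1 < a" and z: "0 \<le> z"
  shows "expect_min a z = (1 - (1 + z) powr (1 - a)) / (a - 1)"
proof -
  define f where "f y = a * (1 + y) powr (-(a + 1)) * min y z" for y :: real
  let ?F = "expect_min_primitive a z"
  have "(LBINT y=ereal 0..\<infinity>. f y) = (1 - (1 + z) powr (1 - a)) / (a - 1) - ?F 0"
  proof (rule interval_integral_FTC_nonneg(2))
    show "DERIV ?F y :> f y" if "ereal 0 < ereal y" for y
      using expect_min_primitive_deriv[OF a, of y z] that by (simp add: f_def)
    show "isCont f y" if "ereal 0 < ereal y" for y
      using that unfolding f_def[abs_def] by (auto intro!: continuous_intros)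
    show "AE y in lborel. ereal 0 < ereal y \<longrightarrow> ereal y < \<infinity> \<longrightarrow> 0 \<le> f y"
      using a z by (auto simp: f_def)
    have "isCont ?F 0"
      using expect_min_primitive_deriv[OF a, of 0 z] by (intro DERIV_isCont) auto
    then show "((?F \<circ> real_of_ereal) \<longlongrightarrow> ?F 0) (at_right (ereal 0))"
      by (simp add: isCont_def filterlim_at_split ereal_tendsto_simps)
    show "((?F \<circ> real_of_ereal) \<longlongrightarrow> (1 - (1 + z) powr (1 - a)) / (a - 1)) (at_left \<infinity>)"
      using expect_min_primitive_at_top[OF a] by (simp add: ereal_tendsto_simps)
  qed simp
  also have "(LBINT y=ereal 0..\<infinity>. f y) = expect_min a z"
    unfolding interval_integral_to_infinity_eq set_lebesgue_integral_def expect_min_def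
    using z by (intro Bochner_Integration.integral_cong) (auto simp: indicator_def f_def Gdens_def)
  finally show ?thesis
    using z by (simp add: expect_min_primitive_def)
qed

lemma condE_closed_form:
  assumes "0 \<le> z"
  shows "condE f z a = f a + (1 - (1 + z) powr (1 - a)) * (f (a + 1) - f a)"
proof -
  have "(1 / (1 + z)) powr (a - 1) = (1 + z) powr (1 - a)"
    using assms by (simp add: powr_divide powr_diff)
  then show ?thesis
    unfolding condE_def Gbar_def Gdist_def by (simp add: algebra_simps)
qed

definition effective_price :: "real \<Rightarrow> (real \<Rightarrow> real) \<Rightarrow> real \<Rightarrow> real" where
  "effective_price p R a = p + R (a + 1) - R a"

definition order_gain :: "real \<Rightarrow> real \<Rightarrow> real \<Rightarrow> real \<Rightarrow> real" where
  "order_gain a K w z = K * (1 - (1 + z) powr (1 - a)) - (a - 1) * w * z"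

definition best_order :: "real \<Rightarrow> real \<Rightarrow> real \<Rightarrow> real" where
  "best_order a K w = (if w < K then (K / w) powr (1 / a) - 1 else 0)"

lemma retailer_objective_eq:
  assumes "1 < a" "0 \<le> z"
  shows "PiR p w z a + condE R z a = R a + order_gain a (effective_price p R a) w z"
  using assms(1)
  unfolding PiR_def expect_min_closed_form[OF assms] condE_closed_form[OF assms(2)]
    order_gain_def effective_price_def
  by (simp add: field_simps)

lemma best_order_pos:
  assumes "1 < a" "0 < w" "w < K"
  shows "0 < best_order a K w"
  using assms by (simp add: best_order_def)

lemma best_order_nonneg:
  assumes "1 < a" "0 < w"
  shows "0 \<le> best_order a K w"
  using best_order_pos[OF assms, of K] by (auto simp: best_order_def)

lemma order_gain_neg:
  assumes a: "1 < a" and w: "K \<le> w" "0 < w" and z: "0 < z"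
  shows "order_gain a K w z < 0"
proof -
  have "1 - (1 + z) powr (1 - a) < (a - 1) * z"
    using powr_gt_bernoulli[of "1 + z" "1 - a"] a z by (simp add: algebra_simps)
  moreover have "0 \<le> 1 - (1 + z) powr (1 - a)"
    using powr_mono[of "1 - a" 0 "1 + z"] a z by simp
  ultimately have "K * (1 - (1 + z) powr (1 - a)) < w * ((a - 1) * z)"
    using w by (meson mult_right_mono mult_strict_left_mono order.strict_trans1)
  then show ?thesis
    by (simp add: order_gain_def algebra_simps)
qed

lemma order_gain_unique_max:
  assumes a: "1 < a" and w: "0 < w" and z: "0 \<le> z" and ne: "z \<noteq> best_order a K w"
  shows "order_gain a K w z < order_gain a K w (best_order a K w)"
proof (cases "w < K")
  case True
  define s0 where "s0 = (K / w) powr (1 / a)"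
  have s0: "0 < s0"
    using True w by (simp add: s0_def)
  have "s0 powr a = K / w"
    using a True w by (simp add: s0_def powr_powr)
  then have tangent: "K * s0 powr (1 - a) = w * s0"
    using s0 w by (simp add: powr_diff field_simps)
  have opt: "best_order a K w = s0 - 1"
    using True by (simp add: best_order_def s0_def)
  \<comment> \<open>Bernoulli's inequality at \<open>(1 + z) / s0\<close> is the tangent-line bound of the concave
      objective at its stationary point \<open>s0 - 1\<close>.\<close>
  have "1 + (1 - a) * ((1 + z) / s0 - 1) < ((1 + z) / s0) powr (1 - a)"
    using z s0 a ne opt by (intro powr_gt_bernoulli) auto
  moreover have "0 < K * s0 powr (1 - a)"
    using tangent w s0 by simp
  ultimately have "K * s0 powr (1 - a) * (1 + (1 - a) * ((1 + z) / s0 - 1))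
      < K * s0 powr (1 - a) * ((1 + z) / s0) powr (1 - a)"
    by (rule mult_strict_left_mono)
  also have "\<dots> = K * (1 + z) powr (1 - a)"
    using s0 z by (simp add: powr_divide)
  finally have "w * s0 * (1 + (1 - a) * ((1 + z) / s0 - 1)) < K * (1 + z) powr (1 - a)"
    unfolding tangent .
  moreover have "w * s0 * (1 + (1 - a) * ((1 + z) / s0 - 1)) = w * s0 + (1 - a) * w * (1 + z - s0)"
    using s0 by (simp add: field_simps)
  moreover have "order_gain a K w (best_order a K w) = K - w * s0 - (a - 1) * w * (s0 - 1)"
    using tangent by (simp add: opt order_gain_def algebra_simps)
  ultimately show ?thesis
    by (simp add: order_gain_def algebra_simps)
next
  case False
  then have "best_order a K w = 0"
    by (simp add: best_order_def)
  with order_gain_neg[OF a _ w, of K z] False ne z show ?thesis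
    by (simp add: order_gain_def)
qed

lemma order_gain_le_best_order:
  assumes "1 < a" "0 < w" "0 \<le> z"
  shows "order_gain a K w z \<le> order_gain a K w (best_order a K w)"
  using order_gain_unique_max[OF assms, where K = K] by (cases "z = best_order a K w") auto

definition wholesale_gain :: "real \<Rightarrow> real \<Rightarrow> real \<Rightarrow> real \<Rightarrow> real \<Rightarrow> real" where
  "wholesale_gain a K c D w =
     (a - 1) * (w - c) * best_order a K w + (1 - (1 + best_order a K w) powr (1 - a)) * D"

lemma manufacturer_objective_eq:
  assumes "1 < a" "0 < w"
  shows "PiM c w (best_order a K w) a + condE M (best_order a K w) a
    = M a + wholesale_gain a K c (M (a + 1) - M a) w"
  unfolding PiM_def condE_closed_form[OF best_order_nonneg[OF assms]] wholesale_gain_def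
  by simp

text \<open>The manufacturer's gain in the variable \<open>s = (w / K) powr (1 / a) = 1 / (1 + best_order a K w)\<close>.\<close>
definition gain_curve :: "real \<Rightarrow> real \<Rightarrow> real \<Rightarrow> real \<Rightarrow> real \<Rightarrow> real" where
  "gain_curve a K c D s = (a - 1) * (K * s powr a - c) * (1 / s - 1) + (1 - s powr (a - 1)) * D"

definition gain_curve_slope :: "real \<Rightarrow> real \<Rightarrow> real \<Rightarrow> real \<Rightarrow> real \<Rightarrow> real" where
  "gain_curve_slope a K c D s = c * s powr (-a) + (a - 1) * K - D - a * K * s"

lemma gain_curve_deriv:
  assumes s: "0 < s"
  shows "(gain_curve a K c D has_real_derivative
           (a - 1) * s powr (a - 2) * gain_curve_slope a K c D s) (at s)"
  unfolding gain_curve_def gain_curve_slope_def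
  by (insert s, (rule derivative_eq_intros refl | simp)+,
      simp add: powr_diff powr_minus field_simps power2_eq_square)

lemma gain_curve_slope_strict_antimono:
  assumes "1 < a" "0 < K" "0 < c" "0 < s" "s < s'"
  shows "gain_curve_slope a K c D s' < gain_curve_slope a K c D s"
proof -
  have "c * s' powr (-a) < c * s powr (-a)"
    using assms by (simp add: powr_less_mono2_neg)
  moreover have "a * K * s < a * K * s'"
    using assms by simp
  ultimately show ?thesis
    unfolding gain_curve_slope_def by linarith
qed

lemma gain_curve_slope_root:
  assumes a: "1 < a" and K: "0 < K" and c: "0 < c" and L: "c < K + D"
  obtains s0 where "0 < s0" "s0 < 1"
    "\<And>s. 0 < s \<Longrightarrow> s < s0 \<Longrightarrow> 0 < gain_curve_slope a K c D s"
    "\<And>s. s0 < s \<Longrightarrow> gain_curve_slope a K c D s < 0"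
proof -
  define B where "B = \<bar>(a - 1) * K - D\<bar> + a * K"
  define e where "e = c / (B + 2 * c)"
  have B: "0 \<le> B"
    using a K by (simp add: B_def)
  have e: "0 < e" "e < 1"
    using B c by (simp_all add: e_def field_simps)
  \<comment> \<open>\<open>c / e \<le> c * e powr (-a)\<close> dominates the remaining terms of the slope at \<open>e\<close>\<close>
  have "c / e \<le> c * e powr (-a)"
    using powr_mono'[of "-a" "-1" e] a e c by (simp add: powr_minus_divide divide_inverse)
  moreover have "c / e = B + 2 * c"
    using B c by (simp add: e_def)
  moreover have "a * K * e \<le> a * K"
    using a K e by simp
  ultimately have slope_e: "0 < gain_curve_slope a K c D e"
    unfolding gain_curve_slope_def B_def using c by linarith
  have slope_1: "gain_curve_slope a K c D 1 < 0"
    using L by (simp add: gain_curve_slope_def algebra_simps)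
  have "continuous_on {e..1} (gain_curve_slope a K c D)"
    unfolding gain_curve_slope_def using e by (intro continuous_intros) auto
  then obtain s0 where s0: "e \<le> s0" "s0 \<le> 1" "gain_curve_slope a K c D s0 = 0"
    using IVT2'[of "gain_curve_slope a K c D" 1 0 e] slope_e slope_1 e by auto
  show thesis
  proof
    show "0 < s0" "s0 < 1"
      using s0 e slope_1 by (auto simp: order.order_iff_strict)
    show "0 < gain_curve_slope a K c D s" if "0 < s" "s < s0" for s
      using gain_curve_slope_strict_antimono[where D = D, OF a K c that] s0 by simp
    show "gain_curve_slope a K c D s < 0" if "s0 < s" for s
      using gain_curve_slope_strict_antimono[where D = D, OF a K c _ that] s0 e by simp
  qed
qed

lemma gain_curve_unique_max:
  assumes a: "1 < a" and K: "0 < K" and c: "0 < c" and L: "c < K + D"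
  obtains s0 where "0 < s0" "s0 < 1" "0 < gain_curve a K c D s0"
    "\<And>s. 0 < s \<Longrightarrow> s \<noteq> s0 \<Longrightarrow> gain_curve a K c D s < gain_curve a K c D s0"
proof -
  obtain s0 where s0: "0 < s0" "s0 < 1"
    and up: "\<And>s. 0 < s \<Longrightarrow> s < s0 \<Longrightarrow> 0 < gain_curve_slope a K c D s"
    and down: "\<And>s. s0 < s \<Longrightarrow> gain_curve_slope a K c D s < 0"
    using gain_curve_slope_root[OF assms] by blast
  have cont: "continuous_on {x..y} (gain_curve a K c D)" if "0 < x" for x y
    using that by (intro continuous_at_imp_continuous_on ballI DERIV_isCont[OF gain_curve_deriv]) auto
  have left: "gain_curve a K c D s < gain_curve a K c D s0" if "0 < s" "s < s0" for s
  proof (rule DERIV_pos_imp_increasing_open[OF that(2) _ cont[OF that(1)]])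
    fix x assume x: "s < x" "x < s0"
    have "0 < (a - 1) * x powr (a - 2) * gain_curve_slope a K c D x"
      using a x that up[of x] by simp
    then show "\<exists>y. DERIV (gain_curve a K c D) x :> y \<and> 0 < y"
      using gain_curve_deriv[of x a K c D] x that by auto
  qed
  have right: "gain_curve a K c D s < gain_curve a K c D s0" if "s0 < s" for s
  proof (rule DERIV_neg_imp_decreasing_open[OF that _ cont[OF s0(1)]])
    fix x assume x: "s0 < x" "x < s"
    have "(a - 1) * x powr (a - 2) * gain_curve_slope a K c D x < 0"
      using a x s0 down[of x] by (simp add: mult_pos_neg)
    then show "\<exists>y. DERIV (gain_curve a K c D) x :> y \<and> y < 0"
      using gain_curve_deriv[of x a K c D] x s0 by auto
  qed
  have "gain_curve a K c D 1 = 0"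
    by (simp add: gain_curve_def)
  then show thesis
    using that[OF s0] right[OF s0(2)] left right by (metis linorder_neqE_linordered_idom)
qed

lemma wholesale_gain_eq_gain_curve:
  assumes a: "1 < a" and w: "0 < w" "w < K"
  shows "wholesale_gain a K c D w = gain_curve a K c D ((w / K) powr (1 / a))"
proof -
  define s where "s = (w / K) powr (1 / a)"
  have s: "0 < s"
    using w by (simp add: s_def)
  have price: "K * s powr a = w"
    using a w by (simp add: s_def powr_powr)
  have order: "best_order a K w = 1 / s - 1"
    using w by (simp add: best_order_def s_def powr_divide)
  have "(1 + best_order a K w) powr (1 - a) = s powr (a - 1)"
    unfolding order using s by (simp add: powr_divide powr_diff)
  then show ?thesis
    unfolding wholesale_gain_def gain_curve_def s_def[symmetric] price order by simp
qed

lemma wholesale_gain_unique_max: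
  assumes a: "1 < a" and K: "0 < K" and c: "0 < c" and L: "c < K + D"
  obtains w0 where "0 < w0" "w0 < K" "0 < wholesale_gain a K c D w0"
    "\<And>w. 0 < w \<Longrightarrow> w \<noteq> w0 \<Longrightarrow> wholesale_gain a K c D w < wholesale_gain a K c D w0"
proof -
  obtain s0 where s0: "0 < s0" "s0 < 1" "0 < gain_curve a K c D s0"
    and max: "\<And>s. 0 < s \<Longrightarrow> s \<noteq> s0 \<Longrightarrow> gain_curve a K c D s < gain_curve a K c D s0"
    using gain_curve_unique_max[OF assms] by blast
  define w0 where "w0 = K * s0 powr a"
  have "s0 powr a < 1"
    using s0 a powr_less_mono2[of a s0 1] by simp
  then have w0: "0 < w0" "w0 < K"
    using K s0 by (simp_all add: w0_def)
  have "(w0 / K) powr (1 / a) = s0"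
    using K a s0 by (simp add: w0_def powr_powr)
  then have gain_w0: "wholesale_gain a K c D w0 = gain_curve a K c D s0"
    using wholesale_gain_eq_gain_curve[OF a w0] by simp
  show thesis
  proof (rule that[OF w0])
    show "0 < wholesale_gain a K c D w0"
      using gain_w0 s0 by simp
    fix w assume w: "0 < w" "w \<noteq> w0"
    show "wholesale_gain a K c D w < wholesale_gain a K c D w0"
    proof (cases "w < K")
      case True
      define s where "s = (w / K) powr (1 / a)"
      have "0 < s" "K * s powr a = w"
        using a w K by (simp_all add: s_def powr_powr)
      then have "s \<noteq> s0"
        using w(2) by (auto simp: w0_def)
      then show ?thesis
        using max[OF \<open>0 < s\<close>] wholesale_gain_eq_gain_curve[OF a w(1) True] gain_w0 by (simp add: s_def)
    next
      case False
      then show ?thesis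
        using gain_w0 s0 by (simp add: wholesale_gain_def best_order_def)
    qed
  qed
qed

definition best_price :: "real \<Rightarrow> real \<Rightarrow> real \<Rightarrow> real \<Rightarrow> real" where
  "best_price a K c D = arg_max_on (wholesale_gain a K c D) Wset"

lemma best_price:
  assumes a: "1 < a" and K: "0 < K" and c: "0 < c" and L: "c < K + D"
  shows "0 < best_price a K c D" "best_price a K c D < K"
    "0 < wholesale_gain a K c D (best_price a K c D)"
    "\<And>w. 0 < w \<Longrightarrow> wholesale_gain a K c D w \<le> wholesale_gain a K c D (best_price a K c D)"
    "\<And>w. 0 < w \<Longrightarrow> (\<And>w'. 0 < w' \<Longrightarrow> wholesale_gain a K c D w' \<le> wholesale_gain a K c D w)
      \<Longrightarrow> w = best_price a K c D"
proof -
  obtain w0 where w0: "0 < w0" "w0 < K" "0 < wholesale_gain a K c D w0"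
    and max: "\<And>w. 0 < w \<Longrightarrow> w \<noteq> w0 \<Longrightarrow> wholesale_gain a K c D w < wholesale_gain a K c D w0"
    using wholesale_gain_unique_max[OF assms] by blast
  have argmax_iff: "0 < w \<and> (\<forall>w'. 0 < w' \<longrightarrow> wholesale_gain a K c D w' \<le> wholesale_gain a K c D w)
      \<longleftrightarrow> w = w0" for w
    using w0(1) max by (smt (verit))
  then have "best_price a K c D = w0"
    unfolding best_price_def arg_max_on_def arg_max_def is_arg_max_linorder Wset_def
    by (intro some_equality) auto
  then show "0 < best_price a K c D" "best_price a K c D < K"
    "0 < wholesale_gain a K c D (best_price a K c D)"
    "\<And>w. 0 < w \<Longrightarrow> wholesale_gain a K c D w \<le> wholesale_gain a K c D (best_price a K c D)"
    "\<And>w. 0 < w \<Longrightarrow> (\<And>w'. 0 < w' \<Longrightarrow> wholesale_gain a K c D w' \<le> wholesale_gain a K c D w)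
      \<Longrightarrow> w = best_price a K c D"
    using w0 argmax_iff by auto
qed

lemma stage_gain_bounds:
  assumes a: "1 < a" and K: "0 < K" and c: "0 < c" and L: "c < K + D"
  defines "w \<equiv> best_price a K c D"
  shows "0 \<le> order_gain a K w (best_order a K w)" "order_gain a K w (best_order a K w) < K"
    "0 \<le> wholesale_gain a K c D w"
    "order_gain a K w (best_order a K w) + wholesale_gain a K c D w < K + D - c"
proof -
  note w = best_price[OF assms(1-4), folded w_def]
  define z where "z = best_order a K w"
  define u where "u = (1 + z) powr (1 - a)"
  have z: "0 < z"
    using best_order_pos[OF a w(1,2)] by (simp add: z_def)
  then have u: "0 < u"
    by (simp add: u_def)
  have "order_gain a K w 0 < order_gain a K w z"
    using order_gain_unique_max[OF a w(1), of 0 K] z by (simp add: z_def)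
  then show "0 \<le> order_gain a K w (best_order a K w)"
    by (simp add: z_def order_gain_def)
  have "0 \<le> (a - 1) * w * z" "0 < K * u"
    using a w(1) z K u by simp_all
  then show "order_gain a K w (best_order a K w) < K"
    by (simp add: order_gain_def z_def[symmetric] u_def[symmetric] algebra_simps)
  show "0 \<le> wholesale_gain a K c D w"
    using w(3) by simp
  have "1 - u < (a - 1) * z"
    using powr_gt_bernoulli[of "1 + z" "1 - a"] z a by (simp add: u_def algebra_simps)
  then have "c * ((1 - u) - (a - 1) * z) < 0"
    using c by (simp add: mult_pos_neg)
  moreover have "0 < u * (K + D - c)"
    using u L by simp
  moreover have "order_gain a K w z + wholesale_gain a K c D w
      = (K + D - c) - u * (K + D - c) + c * ((1 - u) - (a - 1) * z)"
    by (simp add: order_gain_def wholesale_gain_def z_def[symmetric] u_def[symmetric] algebra_simps)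
  ultimately show "order_gain a K w (best_order a K w) + wholesale_gain a K c D w < K + D - c"
    by (simp add: z_def)
qed

definition viable :: "real \<Rightarrow> real \<Rightarrow> (real \<Rightarrow> real) \<Rightarrow> (real \<Rightarrow> real) \<Rightarrow> bool" where
  "viable p c R M \<longleftrightarrow> (\<forall>a>1. 0 < effective_price p R a \<and> c < effective_price p R a + (M (a + 1) - M a))"

definition stage_price :: "real \<Rightarrow> real \<Rightarrow> (real \<Rightarrow> real) \<Rightarrow> (real \<Rightarrow> real) \<Rightarrow> real \<Rightarrow> real" where
  "stage_price p c R M a = best_price a (effective_price p R a) c (M (a + 1) - M a)"

definition next_R :: "real \<Rightarrow> real \<Rightarrow> (real \<Rightarrow> real) \<Rightarrow> (real \<Rightarrow> real) \<Rightarrow> real \<Rightarrow> real" where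
  "next_R p c R M a = R a + order_gain a (effective_price p R a) (stage_price p c R M a)
     (best_order a (effective_price p R a) (stage_price p c R M a))"

definition next_M :: "real \<Rightarrow> real \<Rightarrow> (real \<Rightarrow> real) \<Rightarrow> (real \<Rightarrow> real) \<Rightarrow> real \<Rightarrow> real" where
  "next_M p c R M a = M a + wholesale_gain a (effective_price p R a) c (M (a + 1) - M a) (stage_price p c R M a)"

lemma viable_next:
  assumes viable: "viable p c R M" and c: "0 < c"
  shows "viable p c (next_R p c R M) (next_M p c R M)"
  unfolding viable_def
proof (intro allI impI conjI)
  fix a :: real assume a: "1 < a"
  then have a': "1 < a + 1"
    by simp
  have "0 < effective_price p R a" "c < effective_price p R a + (M (a + 1) - M a)"
    "0 < effective_price p R (a + 1)" "c < effective_price p R (a + 1) + (M (a + 1 + 1) - M (a + 1))"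
    using viable a a' unfolding viable_def by blast+
  note here = stage_gain_bounds[OF a this(1) c this(2)]
    and there = stage_gain_bounds[OF a' this(3) c this(4)]
  show "0 < effective_price p (next_R p c R M) a"
    using here(2) there(1) by (simp add: effective_price_def next_R_def stage_price_def)
  show "c < effective_price p (next_R p c R M) a + (next_M p c R M (a + 1) - next_M p c R M a)"
    using here(4) there(1,3) by (simp add: effective_price_def next_R_def next_M_def stage_price_def)
qed

fun backward_R :: "real \<Rightarrow> real \<Rightarrow> nat \<Rightarrow> real \<Rightarrow> real"
  and backward_M :: "real \<Rightarrow> real \<Rightarrow> nat \<Rightarrow> real \<Rightarrow> real" where
  "backward_R p c 0 = (\<lambda>_. 0)"
| "backward_R p c (Suc n) = next_R p c (backward_R p c n) (backward_M p c n)"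
| "backward_M p c 0 = (\<lambda>_. 0)"
| "backward_M p c (Suc n) = next_M p c (backward_R p c n) (backward_M p c n)"

lemma viable_backward:
  assumes "0 < c" "c < p"
  shows "viable p c (backward_R p c n) (backward_M p c n)"
proof (induction n)
  case 0
  show ?case
    using assms by (simp add: viable_def effective_price_def)
next
  case (Suc n)
  then show ?case
    using viable_next[OF _ assms(1)] by simp
qed

lemma Aset_gt_one: "1 < a1 \<Longrightarrow> a \<in> Aset a1 \<Longrightarrow> 1 < a"
  by (auto simp: Aset_def)

lemma Aset_plus_one:
  assumes "a \<in> Aset a1"
  shows "a + 1 \<in> Aset a1"
proof -
  obtain n where "a = a1 + real n"
    using assms by (auto simp: Aset_def)
  then have "a + 1 = a1 + real (Suc n)"
    by simp
  then show ?thesis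
    unfolding Aset_def by blast
qed

lemma is_SMPS_stageD:
  assumes "is_SMPS p c a1 T ws zs fR fhR fM" "t \<in> {1..T}" "a \<in> Aset a1"
  shows "ws t a \<in> Wset" "\<And>w. w \<in> Wset \<Longrightarrow> zs t a w \<in> Qset"
    "\<And>w. w \<in> Wset \<Longrightarrow> fhR t a w = PiR p w (zs t a w) a + condE (fR (t + 1)) (zs t a w) a"
    "\<And>w z. w \<in> Wset \<Longrightarrow> z \<in> Qset \<Longrightarrow> PiR p w z a + condE (fR (t + 1)) z a \<le> fhR t a w"
    "fM t a = PiM c (ws t a) (zs t a (ws t a)) a + condE (fM (t + 1)) (zs t a (ws t a)) a"
    "\<And>w. w \<in> Wset \<Longrightarrow> PiM c w (zs t a w) a + condE (fM (t + 1)) (zs t a w) a \<le> fM t a"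
    "fR t a = fhR t a (ws t a)"
  using assms unfolding is_SMPS_def by blast+

lemma SMPS_order_stage:
  assumes S: "is_SMPS p c a1 T ws zs fR fhR fM" and a1: "1 < a1"
    and t: "t \<in> {1..T}" and a: "a \<in> Aset a1" and w: "w \<in> Wset"
  shows "zs t a w = best_order a (effective_price p (fR (t + 1)) a) w"
    and "fhR t a w = fR (t + 1) a + order_gain a (effective_price p (fR (t + 1)) a) w (zs t a w)"
proof -
  let ?K = "effective_price p (fR (t + 1)) a"
  have a_gt: "1 < a"
    using Aset_gt_one[OF a1 a] .
  have w_pos: "0 < w"
    using w by (simp add: Wset_def)
  note stage = is_SMPS_stageD[OF S t a]
  have z: "0 \<le> zs t a w"
    using stage(2)[OF w] by (simp add: Qset_def)
  have fhR: "fhR t a w = PiR p w (zs t a w) a + condE (fR (t + 1)) (zs t a w) a"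
    using stage(3)[OF w] .
  have best: "PiR p w (best_order a ?K w) a + condE (fR (t + 1)) (best_order a ?K w) a \<le> fhR t a w"
    using stage(4)[OF w] best_order_nonneg[OF a_gt w_pos, of ?K] by (simp add: Qset_def)
  show "fhR t a w = fR (t + 1) a + order_gain a ?K w (zs t a w)"
    using fhR retailer_objective_eq[OF a_gt z] by simp
  then have "order_gain a ?K w (best_order a ?K w) \<le> order_gain a ?K w (zs t a w)"
    using best retailer_objective_eq[OF a_gt best_order_nonneg[OF a_gt w_pos]] by simp
  then show "zs t a w = best_order a ?K w"
    using order_gain_unique_max[OF a_gt w_pos z] by fastforce
qed

lemma SMPS_price_stage:
  assumes S: "is_SMPS p c a1 T ws zs fR fhR fM" and a1: "1 < a1"
    and t: "t \<in> {1..T}" and a: "a \<in> Aset a1" and c: "0 < c"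
    and K: "0 < effective_price p (fR (t + 1)) a"
    and L: "c < effective_price p (fR (t + 1)) a + (fM (t + 1) (a + 1) - fM (t + 1) a)"
  shows "ws t a = stage_price p c (fR (t + 1)) (fM (t + 1)) a"
    and "fR t a = next_R p c (fR (t + 1)) (fM (t + 1)) a"
    and "fM t a = next_M p c (fR (t + 1)) (fM (t + 1)) a"
proof -
  let ?K = "effective_price p (fR (t + 1)) a" and ?D = "fM (t + 1) (a + 1) - fM (t + 1) a"
  have a_gt: "1 < a"
    using Aset_gt_one[OF a1 a] .
  have gain: "PiM c w (zs t a w) a + condE (fM (t + 1)) (zs t a w) a
      = fM (t + 1) a + wholesale_gain a ?K c ?D w" if "0 < w" for w
    using SMPS_order_stage(1)[OF S a1 t a, of w] manufacturer_objective_eq[OF a_gt that] that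
    by (simp add: Wset_def)
  note stage = is_SMPS_stageD[OF S t a]
  have ws: "0 < ws t a"
    using stage(1) by (simp add: Wset_def)
  have max: "PiM c w (zs t a w) a + condE (fM (t + 1)) (zs t a w) a \<le> fM t a" if "0 < w" for w
    using stage(6) that by (simp add: Wset_def)
  note fM = stage(5) and fR = stage(7)
  show price: "ws t a = stage_price p c (fR (t + 1)) (fM (t + 1)) a"
    unfolding stage_price_def
    using best_price(5)[OF a_gt K c L ws] max gain fM gain[OF ws] by fastforce
  show "fM t a = next_M p c (fR (t + 1)) (fM (t + 1)) a"
    using fM gain[OF ws] price by (simp add: next_M_def)
  show "fR t a = next_R p c (fR (t + 1)) (fM (t + 1)) a"
    using fR SMPS_order_stage[OF S a1 t a, of "ws t a"] ws price by (simp add: next_R_def Wset_def)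
qed

lemma SMPS_stage_unique:
  assumes S: "is_SMPS p c a1 T ws zs fR fhR fM" and S': "is_SMPS p c a1 T ws' zs' fR' fhR' fM'"
    and a1: "1 < a1" and c: "0 < c" and t: "t \<in> {1..T}" and a: "a \<in> Aset a1"
    and viable: "viable p c (fR (t + 1)) (fM (t + 1))"
    and agree: "\<forall>x\<in>{a, a + 1}. fR' (t + 1) x = fR (t + 1) x \<and> fM' (t + 1) x = fM (t + 1) x"
  shows "fR' t a = fR t a" "fM' t a = fM t a" "ws' t a = ws t a"
    "\<And>w. w \<in> Wset \<Longrightarrow> zs' t a w = zs t a w" "\<And>w. w \<in> Wset \<Longrightarrow> fhR' t a w = fhR t a w"
proof -
  have K: "0 < effective_price p (fR (t + 1)) a"
    and L: "c < effective_price p (fR (t + 1)) a + (fM (t + 1) (a + 1) - fM (t + 1) a)"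
    using viable Aset_gt_one[OF a1 a] by (auto simp: viable_def)
  moreover have same_price: "effective_price p (fR' (t + 1)) a = effective_price p (fR (t + 1)) a"
    using agree by (simp add: effective_price_def)
  ultimately have K': "0 < effective_price p (fR' (t + 1)) a"
    and L': "c < effective_price p (fR' (t + 1)) a + (fM' (t + 1) (a + 1) - fM' (t + 1) a)"
    using agree by simp_all
  note stage = SMPS_price_stage[OF S a1 t a c K L] and stage' = SMPS_price_stage[OF S' a1 t a c K' L']
  show "fR' t a = fR t a" "fM' t a = fM t a" "ws' t a = ws t a"
    using stage stage' agree by (simp_all add: next_R_def next_M_def stage_price_def effective_price_def)
  show "zs' t a w = zs t a w" "fhR' t a w = fhR t a w" if "w \<in> Wset" for w
    using SMPS_order_stage[OF S a1 t a that] SMPS_order_stage[OF S' a1 t a that] same_price agree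
    by simp_all
qed

lemma SMPS_unique:
  assumes S: "is_SMPS p c a1 T ws zs fR fhR fM" and S': "is_SMPS p c a1 T ws' zs' fR' fhR' fM'"
    and a1: "1 < a1" and c: "0 < c"
    and viable: "\<And>t. t \<in> {1..T} \<Longrightarrow> viable p c (fR (t + 1)) (fM (t + 1))"
  shows "(\<forall>t\<in>{1..T}. \<forall>a\<in>Aset a1. ws' t a = ws t a \<and> (\<forall>w\<in>Wset. zs' t a w = zs t a w)) \<and>
    (\<forall>t\<in>{1..T+1}. \<forall>a\<in>Aset a1. fR' t a = fR t a \<and> fM' t a = fM t a \<and>
      (\<forall>w\<in>Wset. fhR' t a w = fhR t a w))"
proof -
  note stage = SMPS_stage_unique[OF S S' a1 c _ _ viable]
  have same_values: "\<forall>a\<in>Aset a1. fR' t a = fR t a \<and> fM' t a = fM t a" if t: "t \<in> {1..T + 1}" for t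
  proof -
    have "1 \<le> t" "t \<le> T + 1"
      using t by auto
    from this(2) show ?thesis
    proof (induction t rule: inc_induct)
      case base
      show ?case
        using S S' by (simp add: is_SMPS_def)
    next
      case (step n)
      then have "n \<in> {1..T}"
        using \<open>1 \<le> t\<close> by simp
      then show ?case
        using stage(1,2) step.IH Aset_plus_one by simp
    qed
  qed
  have "ws' t a = ws t a \<and> (\<forall>w\<in>Wset. zs' t a w = zs t a w \<and> fhR' t a w = fhR t a w)"
    if "t \<in> {1..T}" "a \<in> Aset a1" for t a
    using stage(3-5)[OF that] same_values[of "t + 1"] that Aset_plus_one by simp
  moreover have "fhR' (T + 1) a w = fhR (T + 1) a w" if "a \<in> Aset a1" "w \<in> Wset" for a w
    using S S' that by (simp add: is_SMPS_def)
  ultimately show ?thesis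
    using same_values by (auto simp: le_Suc_eq)
qed

locale backward_solution =
  fixes p c :: real and T :: nat
  assumes c_pos: "0 < c" and c_lt_p: "c < p"
begin

definition fR :: "nat \<Rightarrow> real \<Rightarrow> real" where
  "fR t = backward_R p c (T + 1 - t)"

definition fM :: "nat \<Rightarrow> real \<Rightarrow> real" where
  "fM t = backward_M p c (T + 1 - t)"

definition ws :: "nat \<Rightarrow> real \<Rightarrow> real" where
  "ws t = stage_price p c (fR (t + 1)) (fM (t + 1))"

definition zs :: "nat \<Rightarrow> real \<Rightarrow> real \<Rightarrow> real" where
  "zs t a = best_order a (effective_price p (fR (t + 1)) a)"

definition fhR :: "nat \<Rightarrow> real \<Rightarrow> real \<Rightarrow> real" where
  "fhR t a w = (if t \<le> T then PiR p w (zs t a w) a + condE (fR (t + 1)) (zs t a w) a else 0)"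

lemma viable_fR_fM: "viable p c (fR t) (fM t)"
  unfolding fR_def fM_def using viable_backward[OF c_pos c_lt_p] .

lemma fR_fM_step:
  assumes "t \<le> T"
  shows "fR t = next_R p c (fR (t + 1)) (fM (t + 1))" "fM t = next_M p c (fR (t + 1)) (fM (t + 1))"
proof -
  have "T + 1 - t = Suc (T + 1 - (t + 1))"
    using assms by simp
  then show "fR t = next_R p c (fR (t + 1)) (fM (t + 1))" "fM t = next_M p c (fR (t + 1)) (fM (t + 1))"
    unfolding fR_def fM_def by simp_all
qed

lemma equilibrium_bounds:
  assumes a: "1 < a"
  shows "0 < ws t a" "ws t a < p + fR (t + 1) (a + 1) - fR (t + 1) a" "0 < zs t a (ws t a)"
    "0 < p + fR t (a + 1) - fR t a" "fR t a + fM t a < p - c + fR t (a + 1) + fM t (a + 1)"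
proof -
  have K: "0 < effective_price p (fR t') a"
    and L: "c < effective_price p (fR t') a + (fM t' (a + 1) - fM t' a)" for t'
    using viable_fR_fM a by (auto simp: viable_def)
  note price = best_price(1,2)[OF a K c_pos L, of "t + 1", folded stage_price_def]
  show "0 < ws t a" "ws t a < p + fR (t + 1) (a + 1) - fR (t + 1) a"
    using price by (simp_all add: ws_def effective_price_def)
  show "0 < zs t a (ws t a)"
    using best_order_pos[OF a price] by (simp add: zs_def ws_def)
  show "0 < p + fR t (a + 1) - fR t a" "fR t a + fM t a < p - c + fR t (a + 1) + fM t (a + 1)"
    using K[of t] L[of t] by (simp_all add: effective_price_def)
qed

lemma is_SMPS:
  assumes a1: "1 < a1"
  shows "is_SMPS p c a1 T ws zs fR fhR fM"
  unfolding is_SMPS_def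
proof (intro conjI ballI)
  fix t a assume t: "t \<in> {1..T}" and a: "a \<in> Aset a1"
  have a_gt: "1 < a"
    using Aset_gt_one[OF a1 a] .
  let ?K = "effective_price p (fR (t + 1)) a" and ?D = "fM (t + 1) (a + 1) - fM (t + 1) a"
  have K: "0 < ?K" and L: "c < ?K + ?D"
    using viable_fR_fM a_gt by (auto simp: viable_def)
  have price: "0 < ws t a"
    "\<And>w. 0 < w \<Longrightarrow> wholesale_gain a ?K c ?D w \<le> wholesale_gain a ?K c ?D (ws t a)"
    using best_price(1,4)[OF a_gt K c_pos L] by (simp_all add: ws_def stage_price_def)
  have manufacturer: "PiM c w (zs t a w) a + condE (fM (t + 1)) (zs t a w) a
      = fM (t + 1) a + wholesale_gain a ?K c ?D w" if "0 < w" for w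
    unfolding zs_def using manufacturer_objective_eq[OF a_gt that] .
  show "ws t a \<in> Wset"
    using price(1) by (simp add: Wset_def)
  show "zs t a w \<in> Qset" if "w \<in> Wset" for w
    using best_order_nonneg[OF a_gt] that by (simp add: zs_def Wset_def Qset_def)
  show "fhR t a w = PiR p w (zs t a w) a + condE (fR (t + 1)) (zs t a w) a" for w
    using t by (simp add: fhR_def)
  show "PiR p w z a + condE (fR (t + 1)) z a \<le> fhR t a w" if "w \<in> Wset" "z \<in> Qset" for w z
    using that t order_gain_le_best_order[OF a_gt] best_order_nonneg[OF a_gt]
    by (simp add: fhR_def zs_def Wset_def Qset_def retailer_objective_eq[OF a_gt])
  show "fM t a = PiM c (ws t a) (zs t a (ws t a)) a + condE (fM (t + 1)) (zs t a (ws t a)) a"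
    using fR_fM_step(2) t manufacturer[OF price(1)] by (simp add: next_M_def ws_def)
  show "PiM c w (zs t a w) a + condE (fM (t + 1)) (zs t a w) a \<le> fM t a" if "w \<in> Wset" for w
    using fR_fM_step(2) t manufacturer[OF price(1)] manufacturer price(2) that
    by (simp add: next_M_def ws_def Wset_def)
  show "fR t a = fhR t a (ws t a)"
    using fR_fM_step(1) t retailer_objective_eq[OF a_gt best_order_nonneg[OF a_gt price(1)]]
    by (simp add: next_R_def fhR_def zs_def ws_def)
next
  fix a assume "a \<in> Aset a1"
  show "fR (T + 1) a = 0" "fM (T + 1) a = 0" "fhR (T + 1) a w = 0" for w
    by (simp_all add: fR_def fM_def fhR_def)
qed

end

theorem proposition2:
  fixes p c b1 a1 :: real and T :: nat
  assumes "0 < c" and "c < p" and "1 \<le> T" and "0 < b1" and "1 < a1"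
  shows "\<exists>ws zs fR fhR fM.
     is_SMPS p c a1 T ws zs fR fhR fM \<and>
     (\<forall>ws' zs' fR' fhR' fM'. is_SMPS p c a1 T ws' zs' fR' fhR' fM' \<longrightarrow>
        (\<forall>t\<in>{1..T}. \<forall>a\<in>Aset a1. ws' t a = ws t a \<and> (\<forall>w\<in>Wset. zs' t a w = zs t a w)) \<and>
        (\<forall>t\<in>{1..T+1}. \<forall>a\<in>Aset a1. fR' t a = fR t a \<and> fM' t a = fM t a \<and>
            (\<forall>w\<in>Wset. fhR' t a w = fhR t a w))) \<and>
     (\<forall>t\<in>{1..T}. \<forall>a\<in>Aset a1.
        0 < ws t a \<and> ws t a < p + fR (t + 1) (a + 1) - fR (t + 1) a \<and>
        0 < zs t a (ws t a) \<and>
        p + fR t (a + 1) - fR t a > 0 \<and>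
        p - c + fR t (a + 1) + fM t (a + 1) > fR t a + fM t a)"
proof -
  interpret backward_solution p c T
    using assms(1,2) by unfold_locales
  have S: "is_SMPS p c a1 T ws zs fR fhR fM"
    using is_SMPS[OF assms(5)] .
  note unique = SMPS_unique[OF S _ assms(5,1) viable_fR_fM]
  have bounds: "\<forall>t\<in>{1..T}. \<forall>a\<in>Aset a1.
        0 < ws t a \<and> ws t a < p + fR (t + 1) (a + 1) - fR (t + 1) a \<and>
        0 < zs t a (ws t a) \<and>
        p + fR t (a + 1) - fR t a > 0 \<and>
        p - c + fR t (a + 1) + fM t (a + 1) > fR t a + fM t a"
    using equilibrium_bounds Aset_gt_one[OF assms(5)] by fastforce
  show ?thesis
    by (intro exI[of _ ws] exI[of _ zs] exI[of _ fR] exI[of _ fhR] exI[of _ fM] conjI S allI impI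
        unique bounds)
qed

end
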